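(* Let $E\subset\mathbb R^n$ be a bounded open set, $\Omega\in L_s(S^{n-1})$ with $1<s\le\infty$ homogeneous of degree $0$, $p(\cdot)\in\mathcal P^{\log}(E)$ with $p(\cdot)/s'\in\mathcal B(E)$ and $(p')_+\le s$, where $s'=s/(s-1)$. Then $\|M_\Omega f\|_{L^{p(\cdot)}(E)}\lesssim\|f\|_{L^{p(\cdot)}(E)}$ for all $f\in L^{p(\cdot)}(E)$.
   Context: Throughout, $n\ge2$, $B(x,r)$ is the open Euclidean ball, $\tilde B(x,r)=B(x,r)\cap E$. For measurable $p(\cdot):E\to[1,\infty)$ let $p_-=\operatorname{ess\,inf}_Ep$, $p_+=\operatorname{ess\,sup}_Ep$; $L^{p(\cdot)}(E)$ is the set of measurable $f$ with $\int_E(|f(x)|/\lambda)^{p(x)}dx<\infty$ for some $\lambda>0$, with Luxemburg norm $\|f\|_{L^{p(\cdot)}(E)}=\inf\{\lambda>0:\int_E(|f(x)|/\lambda)^{p(x)}dx\le1\}$. $p'(x)=p(x)/(p(x)-1)$, $(p')_+=\operatorname{ess\,sup}_Ep'$. $\mathcal P^{\log}(E)$ is the set of measurable $p$ with $1\le p_-\le p_+<\infty$ satisfying $|p(x)-p(y)|\le -C/\log|x-y|$ for $x,y\in E$, $|x-y|\le1/2$. $\mathcal B(E)$ is the set of $p\in\mathcal P^{\log}(E)$ such that the Hardy–Littlewood maximal operator is bounded on $L^{p(\cdot)}(E)$. $M_\Omega f(x)=\sup_{r>0}\frac1{|B(x,r)|}\int_{\tilde B(x,r)}|\Omega(x-y)||f(y)|dy$.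 *)

theory Defs
  imports "HOL-Analysis.Analysis" "HOL-Probability.Essential_Supremum"
begin

definition ess_sup_on :: "'a::euclidean_space set \<Rightarrow> ('a \<Rightarrow> ereal) \<Rightarrow> ereal" where
  "ess_sup_on E q = esssup (restrict_space lebesgue E) q"

definition p_plus :: "'a::euclidean_space set \<Rightarrow> ('a \<Rightarrow> real) \<Rightarrow> ereal" where
  "p_plus E p = ess_sup_on E (\<lambda>x. ereal (p x))"

definition p_minus :: "'a::euclidean_space set \<Rightarrow> ('a \<Rightarrow> real) \<Rightarrow> ereal" where
  "p_minus E p = - ess_sup_on E (\<lambda>x. - ereal (p x))"

definition conj_exp :: "('a \<Rightarrow> real) \<Rightarrow> 'a \<Rightarrow> ereal" where
  "conj_exp p x = (if p x = 1 then \<infinity> else ereal (p x / (p x - 1)))"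

definition conj_plus :: "'a::euclidean_space set \<Rightarrow> ('a \<Rightarrow> real) \<Rightarrow> ereal" where
  "conj_plus E p = ess_sup_on E (conj_exp p)"

definition sconj :: "ereal \<Rightarrow> real" where
  "sconj s = (if s = \<infinity> then 1 else real_of_ereal s / (real_of_ereal s - 1))"

definition modular :: "'a::euclidean_space set \<Rightarrow> ('a \<Rightarrow> real) \<Rightarrow> ('a \<Rightarrow> ennreal) \<Rightarrow> real \<Rightarrow> ennreal" where
  "modular E p g lam = (\<integral>\<^sup>+ x \<in> E. (if g x = \<infinity> then \<infinity>
        else ennreal ((enn2real (g x) / lam) powr p x)) \<partial>lebesgue)"

text \<open>Luxemburg norm (value \<infinity> if no admissible \<lambda> exists).\<close>
definition lux_norm :: "'a::euclidean_space set \<Rightarrow> ('a \<Rightarrow> real) \<Rightarrow> ('a \<Rightarrow> ennreal) \<Rightarrow> ennreal" where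
  "lux_norm E p g = Inf {ennreal lam | lam. lam > 0 \<and> modular E p g lam \<le> 1}"

definition var_Lp :: "'a::euclidean_space set \<Rightarrow> ('a \<Rightarrow> real) \<Rightarrow> ('a \<Rightarrow> real) set" where
  "var_Lp E p = {f. set_borel_measurable lebesgue E f \<and>
      (\<exists>lam>0. modular E p (\<lambda>x. ennreal \<bar>f x\<bar>) lam < \<infinity>)}"

definition M_Omega :: "'a::euclidean_space set \<Rightarrow> ('a \<Rightarrow> real) \<Rightarrow> ('a \<Rightarrow> real) \<Rightarrow> 'a \<Rightarrow> ennreal" where
  "M_Omega E \<Omega> f x = (SUP r\<in>{0<..}. (\<integral>\<^sup>+ y \<in> ball x r \<inter> E. ennreal (\<bar>\<Omega> (x - y)\<bar> * \<bar>f y\<bar>) \<partial>lebesgue)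
                                     / emeasure lebesgue (ball x r))"

definition HL_max :: "'a::euclidean_space set \<Rightarrow> ('a \<Rightarrow> real) \<Rightarrow> 'a \<Rightarrow> ennreal" where
  "HL_max E f = M_Omega E (\<lambda>_. 1) f"

definition P_log :: "'a::euclidean_space set \<Rightarrow> ('a \<Rightarrow> real) \<Rightarrow> bool" where
  "P_log E p \<longleftrightarrow> set_borel_measurable lebesgue E p \<and> 1 \<le> p_minus E p \<and> p_plus E p < \<infinity> \<and>
     (\<exists>C. \<forall>x\<in>E. \<forall>y\<in>E. dist x y \<le> 1/2 \<longrightarrow> \<bar>p x - p y\<bar> \<le> - C / ln (dist x y))"

definition B_class :: "'a::euclidean_space set \<Rightarrow> ('a \<Rightarrow> real) \<Rightarrow> bool" where
  "B_class E p \<longleftrightarrow> P_log E p \<and>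
     (\<exists>C::real. \<forall>f\<in>var_Lp E p. lux_norm E p (HL_max E f)
                 \<le> ennreal C * lux_norm E p (\<lambda>x. ennreal \<bar>f x\<bar>))"

text \<open>Surface measure on S^{n-1}: \<sigma>(A) = n |{t x : 0<t<1, x\<in>A}| (cone construction).\<close>
definition sphere_measure :: "'a::euclidean_space measure" where
  "sphere_measure = scale_measure (of_nat DIM('a))
     (distr (restrict_space lebesgue (ball 0 1 - {0})) (restrict_space borel (sphere 0 1))
        (\<lambda>x. x /\<^sub>R norm x))"

definition Ls_sphere :: "ereal \<Rightarrow> ('a::euclidean_space \<Rightarrow> real) \<Rightarrow> bool" where
  "Ls_sphere s \<Omega> \<longleftrightarrow> \<Omega> \<in> borel_measurable sphere_measure \<and>
     (if s = \<infinity> then esssup sphere_measure (\<lambda>x. ereal \<bar>\<Omega> x\<bar>) < \<infinity>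
      else (\<integral>\<^sup>+ x. ennreal (\<bar>\<Omega> x\<bar> powr real_of_ereal s) \<partial>sphere_measure) < \<infinity>)"

end

theory Submission
  imports Defs
begin

text \<open>
  Let 1/s + 1/s' = 1. On each ball, Hoelder's inequality gives
  avg_{B(x,r)} |Omega(x-y)| |f(y)| <= (avg_{B(x,r)} |Omega(x-y)|^s)^(1/s) (avg_{B(x,r)} |f|^s')^(1/s'),
  and by homogeneity the first factor is a fixed multiple of the L^s(S^{n-1}) norm of Omega,
  independent of x and r (for s = infinity one bounds |Omega| by its essential supremum instead).
  Hence M_Omega f <= C (M(|f|^s'))^(1/s') pointwise. Since the modulars satisfy
  rho_{p/s'}(|f|^s' / lambda^s') = rho_p(f / lambda), boundedness of M on L^{p(.)/s'}
  turns this pointwise bound into the norm inequality on L^{p(.)}.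
\<close>

section \<open>Modulars and the Luxemburg norm\<close>

lemma modular_mono_AE:
  assumes "AE x in lebesgue. x \<in> E \<longrightarrow> (g x = \<infinity> \<longrightarrow> h x = \<infinity>) \<and>
      (h x \<noteq> \<infinity> \<longrightarrow> (enn2real (g x) / a) powr p x \<le> (enn2real (h x) / b) powr p' x)"
  shows "modular E p g a \<le> modular E p' h b"
  unfolding modular_def
proof (rule nn_integral_mono_AE)
  show "AE x in lebesgue. (if g x = \<infinity> then \<infinity> else ennreal ((enn2real (g x) / a) powr p x)) * indicator E x
      \<le> (if h x = \<infinity> then \<infinity> else ennreal ((enn2real (h x) / b) powr p' x)) * indicator E x"
    using assms by eventually_elim (auto split: split_indicator intro: ennreal_leI)
qed

lemma lux_norm_le: "lam > 0 \<Longrightarrow> modular E p g lam \<le> 1 \<Longrightarrow> lux_norm E p g \<le> ennreal lam"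
  unfolding lux_norm_def by (rule Inf_lower) auto

lemma modular_le_1_if_lux_norm_less:
  assumes "AE x in lebesgue. x \<in> E \<longrightarrow> 0 \<le> p x" and "lux_norm E p g < ennreal mu"
  shows "modular E p g mu \<le> 1"
proof -
  from assms(2) obtain lam where lam: "lam > 0" "modular E p g lam \<le> 1" "ennreal lam < ennreal mu"
    unfolding lux_norm_def Inf_less_iff by auto
  then have "lam < mu" by (simp add: ennreal_less_iff)
  have "modular E p g mu \<le> modular E p g lam"
    using assms(1) by (rule modular_mono_AE[OF eventually_mono])
      (use \<open>lam < mu\<close> lam(1) in \<open>auto intro!: powr_mono2 divide_left_mono\<close>)
  with lam show ?thesis by simp
qed

lemma modular_abs_powr:
  assumes "q > 0" "lam > 0"
  shows "modular E (\<lambda>x. p x / q) (\<lambda>x. ennreal (\<bar>f x\<bar> powr q)) (lam powr q)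
       = modular E p (\<lambda>x. ennreal \<bar>f x\<bar>) lam"
  unfolding modular_def using assms
  by (intro nn_integral_cong) (simp add: powr_divide[symmetric] powr_powr)

definition ennroot :: "real \<Rightarrow> ennreal \<Rightarrow> ennreal" where
  "ennroot q g = (if g = \<infinity> then \<infinity> else ennreal (enn2real g powr (1 / q)))"

lemma ennroot_1 [simp]: "ennroot 1 g = g"
  unfolding ennroot_def by (cases g) auto

lemma ennroot_mono: "q > 0 \<Longrightarrow> a \<le> b \<Longrightarrow> ennroot q a \<le> ennroot q b"
  unfolding ennroot_def
  by (auto intro!: ennreal_leI powr_mono2 enn2real_mono simp: top.not_eq_extremum)

lemma modular_ennroot:
  assumes "q > 0" "mu > 0"
  shows "modular E p (\<lambda>x. ennroot q (G x)) (mu powr (1 / q)) = modular E (\<lambda>x. p x / q) G mu"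
  unfolding modular_def ennroot_def using assms
  by (intro nn_integral_cong) (simp add: powr_divide[symmetric] powr_powr)

lemma modular_mono_cmult:
  assumes "K > 0" "lam > 0" "AE x in lebesgue. x \<in> E \<longrightarrow> 0 \<le> p x"
    and "\<And>x. x \<in> E \<Longrightarrow> F x \<le> ennreal K * G x"
  shows "modular E p F (K * lam) \<le> modular E p G lam"
  using assms(3)
proof (rule modular_mono_AE[OF eventually_mono], intro impI conjI)
  fix x assume x: "x \<in> E" and p: "x \<in> E \<longrightarrow> 0 \<le> p x"
  have FG: "F x \<le> ennreal K * G x" using assms(4)[OF x] .
  then show "F x = \<infinity> \<Longrightarrow> G x = \<infinity>"
    by (metis ennreal_mult_eq_top_iff ennreal_neq_top infinity_ennreal_def top.extremum_uniqueI)
  assume "G x \<noteq> \<infinity>"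
  with FG have "enn2real (F x) \<le> enn2real (ennreal K * G x)"
    by (intro enn2real_mono) (auto simp: ennreal_mult_less_top top.not_eq_extremum)
  also have "\<dots> = K * enn2real (G x)" using assms(1) by (simp add: enn2real_mult)
  finally have "enn2real (F x) \<le> K * enn2real (G x)" .
  then have "enn2real (F x) / (K * lam) \<le> enn2real (G x) / lam"
    using assms(1,2) by (simp add: field_simps)
  then show "(enn2real (F x) / (K * lam)) powr p x \<le> (enn2real (G x) / lam) powr p x"
    using p x assms(1,2) by (intro powr_mono2) auto
qed

lemma ennreal_le_cmult_Inf:
  fixes x :: ennreal
  assumes "c > 0" "\<And>l. l \<in> S \<Longrightarrow> x \<le> ennreal c * l"
  shows "x \<le> ennreal c * Inf S"
proof -
  have "x / ennreal c \<le> Inf S"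
    using assms by (intro Inf_greatest divide_le_posI_ennreal) auto
  then have "ennreal c * (x / ennreal c) \<le> ennreal c * Inf S" by (rule mult_left_mono) simp
  moreover have "ennreal c * (x / ennreal c) = x"
    using assms(1) mult_divide_eq_ennreal[of "ennreal c" x] by (simp add: ennreal_times_divide mult.commute)
  ultimately show ?thesis by simp
qed

lemma AE_ge_1_if_p_minus_ge_1:
  assumes "1 \<le> p_minus E p" "E \<in> sets lebesgue"
  shows "AE x in lebesgue. x \<in> E \<longrightarrow> 1 \<le> p x"
proof -
  let ?S = "esssup (restrict_space lebesgue E) (\<lambda>x. - ereal (p x))"
  have S: "?S \<le> -1" using assms(1) unfolding p_minus_def ess_sup_on_def
    by (metis ereal_minus_le_minus ereal_uminus_uminus)
  have "AE x in restrict_space lebesgue E. - ereal (p x) \<le> ?S" by (rule esssup_AE)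
  then have "AE x in restrict_space lebesgue E. 1 \<le> p x"
    by eventually_elim (use S in \<open>auto dest: order_trans simp: one_ereal_def\<close>)
  with assms(2) show ?thesis by (subst (asm) AE_restrict_space_iff) auto
qed

lemma modular_ennroot_maximal_le_1:
  fixes E :: "'a::euclidean_space set"
  assumes q: "q > 0" and pq: "AE x in lebesgue. x \<in> E \<longrightarrow> 0 \<le> p x / q" and C1: "C1 \<ge> 0"
    and HL: "\<And>g. g \<in> var_Lp E (\<lambda>x. p x / q) \<Longrightarrow> lux_norm E (\<lambda>x. p x / q) (HL_max E g)
               \<le> ennreal C1 * lux_norm E (\<lambda>x. p x / q) (\<lambda>x. ennreal \<bar>g x\<bar>)"
    and f: "set_borel_measurable lebesgue E f"
    and lam: "lam > 0" "modular E p (\<lambda>x. ennreal \<bar>f x\<bar>) lam \<le> 1"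
  shows "modular E p (\<lambda>x. ennroot q (HL_max E (\<lambda>y. \<bar>f y\<bar> powr q) x))
           (((C1 + 1) * lam powr q) powr (1 / q)) \<le> 1"
proof -
  let ?g = "\<lambda>y. \<bar>f y\<bar> powr q"
  have lq: "lam powr q > 0" using lam by simp
  have mod_g: "modular E (\<lambda>x. p x / q) (\<lambda>x. ennreal \<bar>?g x\<bar>) (lam powr q) \<le> 1"
    using lam by (simp add: modular_abs_powr[OF q lam(1)])
  have "(\<lambda>x. indicator E x *\<^sub>R ?g x) = (\<lambda>x. \<bar>indicator E x *\<^sub>R f x\<bar> powr q)"
    by (auto simp: indicator_def fun_eq_iff)
  then have "set_borel_measurable lebesgue E ?g"
    using f unfolding set_borel_measurable_def by simp
  with mod_g lq have "?g \<in> var_Lp E (\<lambda>x. p x / q)"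
    unfolding var_Lp_def by (auto intro!: exI[of _ "lam powr q"] order_le_less_trans[OF _ ennreal_one_less_top])
  then have "lux_norm E (\<lambda>x. p x / q) (HL_max E ?g) \<le> ennreal C1 * lux_norm E (\<lambda>x. p x / q) (\<lambda>x. ennreal \<bar>?g x\<bar>)"
    by (rule HL)
  also have "\<dots> \<le> ennreal C1 * ennreal (lam powr q)"
    by (intro mult_left_mono lux_norm_le[OF lq mod_g]) simp
  also have "\<dots> < ennreal ((C1 + 1) * lam powr q)"
    using lq C1 by (simp add: ennreal_mult[symmetric] ennreal_lessI)
  finally have "modular E (\<lambda>x. p x / q) (HL_max E ?g) ((C1 + 1) * lam powr q) \<le> 1"
    by (rule modular_le_1_if_lux_norm_less[OF pq])
  moreover have "(C1 + 1) * lam powr q > 0" using lq C1 by simp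
  ultimately show ?thesis by (simp add: modular_ennroot[OF q])
qed

lemma lux_norm_bound_if_dominated_by_maximal_power:
  fixes E :: "'a::euclidean_space set" and T :: "('a \<Rightarrow> real) \<Rightarrow> 'a \<Rightarrow> ennreal"
  assumes q: "q > 0" and E: "E \<in> sets lebesgue" and B: "B_class E (\<lambda>x. p x / q)" and K: "K > 0"
    and dom: "\<And>f x. set_borel_measurable lebesgue E f \<Longrightarrow> x \<in> E \<Longrightarrow>
               T f x \<le> ennreal K * ennroot q (HL_max E (\<lambda>y. \<bar>f y\<bar> powr q) x)"
  shows "\<exists>C. \<forall>f\<in>var_Lp E p. lux_norm E p (T f) \<le> ennreal C * lux_norm E p (\<lambda>x. ennreal \<bar>f x\<bar>)"
proof -
  from B obtain C1 where C1: "\<And>g. g \<in> var_Lp E (\<lambda>x. p x / q) \<Longrightarrow> lux_norm E (\<lambda>x. p x / q) (HL_max E g)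
                 \<le> ennreal C1 * lux_norm E (\<lambda>x. p x / q) (\<lambda>x. ennreal \<bar>g x\<bar>)"
    and "P_log E (\<lambda>x. p x / q)" unfolding B_class_def by blast
  then have "AE x in lebesgue. x \<in> E \<longrightarrow> 1 \<le> p x / q"
    using E unfolding P_log_def by (intro AE_ge_1_if_p_minus_ge_1) auto
  then have pq: "AE x in lebesgue. x \<in> E \<longrightarrow> 0 \<le> p x / q"
    and p: "AE x in lebesgue. x \<in> E \<longrightarrow> 0 \<le> p x"
    using q by (auto elim!: eventually_mono simp: le_divide_eq)
  define C0 where "C0 = max C1 0"
  have "ennreal C0 = ennreal C1" unfolding C0_def by (simp add: max_def ennreal_neg)
  with C1 have C0: "\<And>g. g \<in> var_Lp E (\<lambda>x. p x / q) \<Longrightarrow> lux_norm E (\<lambda>x. p x / q) (HL_max E g)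
                 \<le> ennreal C0 * lux_norm E (\<lambda>x. p x / q) (\<lambda>x. ennreal \<bar>g x\<bar>)"
    by simp
  have C0_nonneg: "C0 \<ge> 0" by (simp add: C0_def)
  define C where "C = K * (C0 + 1) powr (1 / q)"
  have C: "C > 0" unfolding C_def using K C0_nonneg by simp
  show ?thesis
  proof (intro exI ballI)
    fix f assume "f \<in> var_Lp E p"
    then have f: "set_borel_measurable lebesgue E f" unfolding var_Lp_def by auto
    have "lux_norm E p (T f) \<le> ennreal C * ennreal lam"
      if lam: "lam > 0" "modular E p (\<lambda>x. ennreal \<bar>f x\<bar>) lam \<le> 1" for lam
    proof -
      define mu where "mu = ((C0 + 1) * lam powr q) powr (1 / q)"
      have mu: "mu > 0" unfolding mu_def using C0_nonneg lam by simp
      have "modular E p (T f) (K * mu) \<le> modular E p (\<lambda>x. ennroot q (HL_max E (\<lambda>y. \<bar>f y\<bar> powr q) x)) mu"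
        using dom[OF f] by (rule modular_mono_cmult[OF K mu p])
      also have "\<dots> \<le> 1"
        unfolding mu_def by (rule modular_ennroot_maximal_le_1[OF q pq C0_nonneg C0 f lam])
      finally have "lux_norm E p (T f) \<le> ennreal (K * mu)"
        using K mu by (intro lux_norm_le) auto
      also have "K * mu = C * lam"
        unfolding mu_def C_def using lam q C0_nonneg by (simp add: powr_mult powr_powr)
      finally show ?thesis using lam C by (simp add: ennreal_mult)
    qed
    then show "lux_norm E p (T f) \<le> ennreal C * lux_norm E p (\<lambda>x. ennreal \<bar>f x\<bar>)"
      unfolding lux_norm_def[of E p "\<lambda>x. ennreal \<bar>f x\<bar>"] using C
      by (intro ennreal_le_cmult_Inf) auto
  qed
qed

section \<open>Hoelder's inequality for nonnegative integrals\<close>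

lemma Youngs_inequality_scaled:
  fixes a b t \<sigma> q :: real
  assumes "\<sigma> > 1" "q > 1" "1/\<sigma> + 1/q = 1" "t > 0" "a \<ge> 0" "b \<ge> 0"
  shows "a * b \<le> t powr \<sigma> / \<sigma> * a powr \<sigma> + b powr q / (q * t powr q)"
proof -
  have "(t * a) * (b / t) \<le> (t * a) powr \<sigma> / \<sigma> + (b / t) powr q / q"
    by (rule Youngs_inequality) (use assms in auto)
  then show ?thesis using assms by (simp add: powr_mult powr_divide field_simps)
qed

lemma divide_powr_conjugate:
  fixes x \<sigma> q :: real
  assumes "x > 0" "1/\<sigma> + 1/q = 1"
  shows "x / x powr (1/q) = x powr (1/\<sigma>)"
proof -
  have "x powr (1/\<sigma>) * x powr (1/q) = x" using assms by (simp flip: powr_add)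
  then show ?thesis using assms(1) by (simp add: field_simps)
qed

lemma Young_balanced_scale:
  fixes A B \<sigma> q :: real
  assumes "A > 0" "B > 0" "\<sigma> > 1" "q > 1" and conj: "1/\<sigma> + 1/q = 1"
  defines "t \<equiv> (B / A) powr (1 / (\<sigma> + q))"
  shows "t powr \<sigma> / \<sigma> * A + 1 / (q * t powr q) * B = A powr (1/\<sigma>) * B powr (1/q)"
proof -
  have "\<sigma> + q = \<sigma> * q" using conj assms(3,4) by (simp add: field_simps)
  then have t\<sigma>: "t powr \<sigma> = (B / A) powr (1/q)" and tq: "t powr q = (B / A) powr (1/\<sigma>)"
    using assms(3,4) unfolding t_def by (simp_all add: powr_powr)
  have "t powr \<sigma> * A = B powr (1/q) * (A / A powr (1/q))"
    using assms unfolding t\<sigma> by (simp add: powr_divide)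
  also have "\<dots> = A powr (1/\<sigma>) * B powr (1/q)"
    using \<open>A > 0\<close> conj by (simp add: divide_powr_conjugate)
  finally have ta: "t powr \<sigma> * A = A powr (1/\<sigma>) * B powr (1/q)" .
  have "B / t powr q = A powr (1/\<sigma>) * (B / B powr (1/\<sigma>))"
    using assms unfolding tq by (simp add: powr_divide)
  also have "B / B powr (1/\<sigma>) = B powr (1/q)"
    using assms conj by (simp add: divide_powr_conjugate add.commute)
  finally have tb: "B / t powr q = A powr (1/\<sigma>) * B powr (1/q)" .
  have "t powr \<sigma> / \<sigma> * A + 1 / (q * t powr q) * B = (t powr \<sigma> * A) / \<sigma> + (B / t powr q) / q"
    by (simp add: mult.commute)
  also have "\<dots> = A powr (1/\<sigma>) * B powr (1/q) * (1/\<sigma> + 1/q)"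
    unfolding ta tb by (simp add: algebra_simps)
  finally show ?thesis using conj by simp
qed

lemma nn_integral_eq_0_if_powr_integral_eq_0:
  assumes [measurable]: "c \<in> borel_measurable M"
    and "(\<integral>\<^sup>+x. ennreal (c x powr r) \<partial>M) = 0" and "\<And>x. c x = 0 \<Longrightarrow> g x = 0"
  shows "(\<integral>\<^sup>+x. ennreal (g x) \<partial>M) = 0"
proof -
  have "AE x in M. ennreal (c x powr r) = 0"
    using assms(2) by (subst (asm) nn_integral_0_iff_AE) auto
  then have "AE x in M. ennreal (g x) = 0"
    by eventually_elim (simp add: assms(3))
  then show ?thesis by (subst nn_integral_cong_AE[where v = "\<lambda>_. 0"]) auto
qed

lemma nn_integral_Holder_finite:
  fixes a b :: "'a \<Rightarrow> real" and \<sigma> q A B :: real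
  assumes \<sigma>: "\<sigma> > 1" and q: "q > 1" and conj: "1/\<sigma> + 1/q = 1"
    and [measurable]: "a \<in> borel_measurable M" "b \<in> borel_measurable M"
    and nonneg: "\<And>x. a x \<ge> 0" "\<And>x. b x \<ge> 0"
    and A: "(\<integral>\<^sup>+x. ennreal (a x powr \<sigma>) \<partial>M) \<le> ennreal A" "A > 0"
    and B: "(\<integral>\<^sup>+x. ennreal (b x powr q) \<partial>M) = ennreal B" "B > 0"
  shows "(\<integral>\<^sup>+x. ennreal (a x * b x) \<partial>M) \<le> ennreal (A powr (1/\<sigma>) * B powr (1/q))"
proof -
  define t where "t = (B / A) powr (1 / (\<sigma> + q))"
  have t: "t > 0" using A B by (simp add: t_def)
  define c1 where "c1 = t powr \<sigma> / \<sigma>"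
  define c2 where "c2 = 1 / (q * t powr q)"
  have c: "c1 \<ge> 0" "c2 \<ge> 0" using \<sigma> q t by (simp_all add: c1_def c2_def)
  have "(\<integral>\<^sup>+x. ennreal (a x * b x) \<partial>M) \<le> (\<integral>\<^sup>+x. ennreal (c1 * a x powr \<sigma> + c2 * b x powr q) \<partial>M)"
    unfolding c1_def c2_def using Youngs_inequality_scaled[OF \<sigma> q conj t nonneg]
    by (intro nn_integral_mono ennreal_leI) simp
  also have "\<dots> = ennreal c1 * (\<integral>\<^sup>+x. ennreal (a x powr \<sigma>) \<partial>M) + ennreal c2 * ennreal B"
    using c B(1) by (simp add: ennreal_mult nn_integral_add nn_integral_cmult)
  also have "\<dots> \<le> ennreal (c1 * A + c2 * B)"
    using A B c by (simp add: ennreal_mult mult_left_mono)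
  also have "c1 * A + c2 * B = A powr (1/\<sigma>) * B powr (1/q)"
    unfolding c1_def c2_def t_def by (rule Young_balanced_scale[OF A(2) B(2) \<sigma> q conj])
  finally show ?thesis .
qed

lemma nn_integral_Holder:
  fixes a b :: "'a \<Rightarrow> real" and \<sigma> q A :: real
  assumes \<sigma>: "\<sigma> > 1" and q: "q > 1" and conj: "1/\<sigma> + 1/q = 1"
    and [measurable]: "a \<in> borel_measurable M" "b \<in> borel_measurable M"
    and nonneg: "\<And>x. a x \<ge> 0" "\<And>x. b x \<ge> 0"
    and A: "(\<integral>\<^sup>+x. ennreal (a x powr \<sigma>) \<partial>M) \<le> ennreal A"
  shows "(\<integral>\<^sup>+x. ennreal (a x * b x) \<partial>M) \<le> ennreal (A powr (1/\<sigma>)) * ennroot q (\<integral>\<^sup>+x. ennreal (b x powr q) \<partial>M)"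
proof -
  let ?B = "\<integral>\<^sup>+x. ennreal (b x powr q) \<partial>M"
  consider "A \<le> 0" | "?B = 0" | "A > 0" "?B = \<infinity>" | B where "A > 0" "?B = ennreal B" "B > 0"
    by (cases ?B) (force simp: ennreal_neg)+
  then show ?thesis
  proof cases
    case 1
    with A have "(\<integral>\<^sup>+x. ennreal (a x powr \<sigma>) \<partial>M) = 0" by (simp add: ennreal_neg)
    then show ?thesis by (subst nn_integral_eq_0_if_powr_integral_eq_0[of a]) auto
  next
    case 2
    then show ?thesis by (subst nn_integral_eq_0_if_powr_integral_eq_0[of b]) auto
  next
    case 3
    then show ?thesis by (simp add: ennroot_def ennreal_mult_top)
  next
    case (4 B)
    then show ?thesis
      using nn_integral_Holder_finite[OF \<sigma> q conj _ _ nonneg A] by (simp add: ennroot_def ennreal_mult)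
  qed
qed

section \<open>Homogeneous kernels\<close>

lemma nn_integral_ball_reflect_scale:
  fixes g :: "'a::euclidean_space \<Rightarrow> ennreal"
  assumes g[measurable]: "g \<in> borel_measurable borel" and r: "r > 0"
  shows "(\<integral>\<^sup>+ y. g (x - y) * indicator (ball x r) y \<partial>lborel)
       = ennreal (r ^ DIM('a)) * (\<integral>\<^sup>+ z. g (r *\<^sub>R z) * indicator (ball 0 1) z \<partial>lborel)"
proof -
  have [measurable]: "ball (0::'a) 1 \<in> sets borel" by simp
  have "lborel = density (distr lborel borel (\<lambda>z. x + (-r) *\<^sub>R z)) (\<lambda>_. \<bar>-r\<bar> ^ DIM('a))"
    by (rule lborel_affine) (use r in auto)
  then have "(\<integral>\<^sup>+ y. g (x - y) * indicator (ball x r) y \<partial>lborel)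
      = (\<integral>\<^sup>+ y. g (x - y) * indicator (ball x r) y
           \<partial>density (distr lborel borel (\<lambda>z. x + (-r) *\<^sub>R z)) (\<lambda>_. \<bar>-r\<bar> ^ DIM('a)))"
    by (rule arg_cong)
  also have "\<dots> = (\<integral>\<^sup>+ z. ennreal (r ^ DIM('a)) * (g (r *\<^sub>R z) * indicator (ball 0 1) z) \<partial>lborel)"
    using r by (simp add: nn_integral_density nn_integral_distr dist_norm indicator_def)
  also have "\<dots> = ennreal (r ^ DIM('a)) * (\<integral>\<^sup>+ z. g (r *\<^sub>R z) * indicator (ball 0 1) z \<partial>lborel)"
    by (rule nn_integral_cmult) measurable
  finally show ?thesis .
qed

lemma homogeneous_normalize:
  assumes hom: "\<And>x t. t > 0 \<Longrightarrow> \<Omega> (t *\<^sub>R x) = \<Omega> x" and "z \<noteq> 0"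
  shows "\<Omega> (z /\<^sub>R norm z) = \<Omega> z"
  using hom[of "inverse (norm z)" z] assms(2) by simp

lemma sets_sphere_measure:
  "sets (sphere_measure :: 'a::euclidean_space measure) = sets (restrict_space borel (sphere (0::'a) 1))"
  unfolding sphere_measure_def by simp

lemma borel_measurable_homogeneous:
  fixes \<Omega> :: "'a::euclidean_space \<Rightarrow> real"
  assumes hom: "\<And>x t. t > 0 \<Longrightarrow> \<Omega> (t *\<^sub>R x) = \<Omega> x"
    and m: "\<Omega> \<in> borel_measurable sphere_measure"
  shows "\<Omega> \<in> borel_measurable borel"
proof -
  have "\<Omega> \<in> borel_measurable (restrict_space borel (sphere (0::'a) 1))"
    using m measurable_cong_sets[OF sets_sphere_measure refl] by blast
  moreover have "(\<lambda>z::'a. z /\<^sub>R norm z) \<in> measurable (restrict_space borel (- {0})) (restrict_space borel (sphere 0 1))"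
    by (intro measurable_restrict_space2 measurable_restrict_space1) (auto simp: space_restrict_space)
  ultimately have "(\<lambda>z. \<Omega> (z /\<^sub>R norm z)) \<in> borel_measurable (restrict_space borel (- {0::'a}))"
    by (rule measurable_compose[rotated])
  then have "\<Omega> \<in> borel_measurable (restrict_space borel (- {0::'a}))"
    by (rule measurable_cong[THEN iffD1, rotated]) (auto simp: space_restrict_space homogeneous_normalize[of \<Omega>, OF hom])
  then have [measurable]: "(\<lambda>z. indicator (- {0::'a}) z *\<^sub>R \<Omega> z) \<in> borel_measurable borel"
    by (subst (asm) borel_measurable_restrict_space_iff) auto
  have "\<Omega> = (\<lambda>z. indicator (- {0::'a}) z *\<^sub>R \<Omega> z + indicator {0} z * \<Omega> 0)"
    by (auto simp: fun_eq_iff indicator_def)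
  also have "\<dots> \<in> borel_measurable borel" by measurable
  finally show ?thesis .
qed

lemma nn_integral_sphere_measure_homogeneous:
  fixes \<Omega> :: "'a::euclidean_space \<Rightarrow> real" and h :: "real \<Rightarrow> ennreal"
  assumes hom: "\<And>x t. t > 0 \<Longrightarrow> \<Omega> (t *\<^sub>R x) = \<Omega> x"
    and m: "\<Omega> \<in> borel_measurable sphere_measure"
    and h[measurable]: "h \<in> borel_measurable borel"
  shows "(\<integral>\<^sup>+ w. h (\<Omega> w) \<partial>(sphere_measure::'a measure))
       = of_nat DIM('a) * (\<integral>\<^sup>+ z. h (\<Omega> z) * indicator (ball 0 1) z \<partial>lborel)"
proof -
  have [measurable]: "\<Omega> \<in> borel_measurable borel" by (rule borel_measurable_homogeneous[OF hom m])
  let ?D = "restrict_space lebesgue (ball (0::'a) 1 - {0})"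
  let ?S = "restrict_space borel (sphere (0::'a) 1)"
  have "\<Omega> \<in> borel_measurable ?S"
    using m measurable_cong_sets[OF sets_sphere_measure refl] by blast
  then have hm: "(\<lambda>w. h (\<Omega> w)) \<in> borel_measurable ?S" by measurable
  have "(\<lambda>z::'a. z /\<^sub>R norm z) \<in> borel_measurable lebesgue"
    by (rule measurable_completion) measurable
  then have nrm: "(\<lambda>z::'a. z /\<^sub>R norm z) \<in> measurable ?D ?S"
    by (intro measurable_restrict_space2 measurable_restrict_space1) (auto simp: space_restrict_space)
  have "(\<integral>\<^sup>+ w. h (\<Omega> w) \<partial>(sphere_measure::'a measure))
      = of_nat DIM('a) * (\<integral>\<^sup>+ w. h (\<Omega> w) \<partial>distr ?D ?S (\<lambda>x. x /\<^sub>R norm x))"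
    unfolding sphere_measure_def
    by (rule nn_integral_scale_measure) (use hm measurable_cong_sets in auto)
  also have "(\<integral>\<^sup>+ w. h (\<Omega> w) \<partial>distr ?D ?S (\<lambda>x. x /\<^sub>R norm x)) = (\<integral>\<^sup>+ z. h (\<Omega> (z /\<^sub>R norm z)) \<partial>?D)"
    by (rule nn_integral_distr[OF nrm]) (use hm in simp)
  also have "\<dots> = (\<integral>\<^sup>+ z. h (\<Omega> (z /\<^sub>R norm z)) * indicator (ball 0 1 - {0}) z \<partial>lebesgue)"
    by (rule nn_integral_restrict_space) simp
  also have "\<dots> = (\<integral>\<^sup>+ z. h (\<Omega> z) * indicator (ball 0 1) z \<partial>lebesgue)"
  proof (rule nn_integral_cong_AE)
    have "AE z in lebesgue. z \<notin> {0::'a}" by (rule AE_not_in) simp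
    then show "AE z in lebesgue. h (\<Omega> (z /\<^sub>R norm z)) * indicator (ball 0 1 - {0}) z
                                = h (\<Omega> z) * indicator (ball 0 1) z"
      by eventually_elim (auto simp: homogeneous_normalize[of \<Omega>, OF hom] indicator_def)
  qed
  also have "\<dots> = (\<integral>\<^sup>+ z. h (\<Omega> z) * indicator (ball 0 1) z \<partial>lborel)"
    by (rule nn_integral_completion)
  finally show ?thesis .
qed

lemma nn_integral_ball_homogeneous:
  fixes \<Omega> :: "'a::euclidean_space \<Rightarrow> real" and h :: "real \<Rightarrow> ennreal"
  assumes hom: "\<And>x t. t > 0 \<Longrightarrow> \<Omega> (t *\<^sub>R x) = \<Omega> x"
    and m: "\<Omega> \<in> borel_measurable sphere_measure"
    and h[measurable]: "h \<in> borel_measurable borel" and r: "r > 0"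
  shows "of_nat DIM('a) * (\<integral>\<^sup>+ y. h (\<Omega> (x - y)) * indicator (ball x r) y \<partial>lebesgue)
       = ennreal (r ^ DIM('a)) * (\<integral>\<^sup>+ w. h (\<Omega> w) \<partial>(sphere_measure::'a measure))"
proof -
  have [measurable]: "\<Omega> \<in> borel_measurable borel" by (rule borel_measurable_homogeneous[OF hom m])
  have "(\<integral>\<^sup>+ y. h (\<Omega> (x - y)) * indicator (ball x r) y \<partial>lebesgue)
      = (\<integral>\<^sup>+ y. h (\<Omega> (x - y)) * indicator (ball x r) y \<partial>lborel)"
    by (rule nn_integral_completion)
  also have "\<dots> = ennreal (r ^ DIM('a)) * (\<integral>\<^sup>+ z. h (\<Omega> (r *\<^sub>R z)) * indicator (ball 0 1) z \<partial>lborel)"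
    by (rule nn_integral_ball_reflect_scale[where g="\<lambda>z. h (\<Omega> z)", OF _ r]) measurable
  also have "\<dots> = ennreal (r ^ DIM('a)) * (\<integral>\<^sup>+ z. h (\<Omega> z) * indicator (ball 0 1) z \<partial>lborel)"
    using r by (simp add: hom)
  finally show ?thesis
    by (simp add: nn_integral_sphere_measure_homogeneous[OF hom m h] ac_simps)
qed

lemma nn_integral_ball_homogeneous_eq_cmult_volume:
  fixes \<Omega> :: "'a::euclidean_space \<Rightarrow> real" and h :: "real \<Rightarrow> ennreal"
  assumes hom: "\<And>x t. t > 0 \<Longrightarrow> \<Omega> (t *\<^sub>R x) = \<Omega> x"
    and m: "\<Omega> \<in> borel_measurable sphere_measure"
    and h: "h \<in> borel_measurable borel" and r: "r > 0"
    and a: "(\<integral>\<^sup>+w. h (\<Omega> w) \<partial>(sphere_measure::'a measure)) = ennreal a" "a \<ge> 0"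
  shows "(\<integral>\<^sup>+y. h (\<Omega> (x - y)) * indicator (ball x r) y \<partial>lebesgue)
       = ennreal (a / (DIM('a) * unit_ball_vol DIM('a))) * emeasure lebesgue (ball x r)"
proof -
  define c where "c = a / (DIM('a) * unit_ball_vol DIM('a))"
  have c: "c \<ge> 0" unfolding c_def using a by simp
  have "of_nat DIM('a) * (\<integral>\<^sup>+y. h (\<Omega> (x - y)) * indicator (ball x r) y \<partial>lebesgue)
      = ennreal (r ^ DIM('a) * a)"
    using nn_integral_ball_homogeneous[OF hom m h r, of x] a r by (simp add: ennreal_mult)
  also have "r ^ DIM('a) * a = DIM('a) * (c * (unit_ball_vol DIM('a) * r ^ DIM('a)))"
    by (simp add: c_def less_imp_neq[symmetric])
  also have "ennreal \<dots> = of_nat DIM('a) * (ennreal c * emeasure lebesgue (ball x r))"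
    using c r by (simp add: emeasure_ball ennreal_mult ennreal_of_nat_eq_real_of_nat)
  finally show ?thesis unfolding c_def by (simp add: ennreal_mult_cancel_left)
qed

section \<open>Pointwise domination of the maximal operator\<close>

lemma ball_average_Holder:
  fixes E :: "'a::euclidean_space set" and \<Omega> :: "'a \<Rightarrow> real"
  assumes \<sigma>: "\<sigma> > 1" and q: "q > 1" and conj: "1/\<sigma> + 1/q = 1"
    and E: "E \<in> sets lebesgue" and f: "set_borel_measurable lebesgue E f"
    and [measurable]: "\<Omega> \<in> borel_measurable borel" and r: "r > 0" and c: "c \<ge> 0"
    and \<Omega>_bound: "(\<integral>\<^sup>+y. ennreal (\<bar>\<Omega> (x - y)\<bar> powr \<sigma>) * indicator (ball x r) y \<partial>lebesgue)
                  \<le> ennreal c * emeasure lebesgue (ball x r)"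
  shows "(\<integral>\<^sup>+y \<in> ball x r \<inter> E. ennreal (\<bar>\<Omega> (x - y)\<bar> * \<bar>f y\<bar>) \<partial>lebesgue) / emeasure lebesgue (ball x r)
       \<le> ennreal (c powr (1/\<sigma>)) *
         ennroot q ((\<integral>\<^sup>+y \<in> ball x r \<inter> E. ennreal (\<bar>f y\<bar> powr q) \<partial>lebesgue) / emeasure lebesgue (ball x r))"
proof -
  let ?S = "ball x r \<inter> E"
  define V where "V = emeasure lebesgue (ball x r)"
  let ?N = "scale_measure (inverse V) (density lebesgue (indicator ?S))"
  have [measurable]: "?S \<in> sets lebesgue" using E by (intro sets.Int) auto
  have average: "(\<integral>\<^sup>+y. g y \<partial>?N) = (\<integral>\<^sup>+y \<in> ?S. g y \<partial>lebesgue) / V"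
    if [measurable]: "g \<in> borel_measurable lebesgue" for g
    by (simp add: nn_integral_scale_measure nn_integral_density divide_ennreal_def mult.commute)
  define F where "F y = \<bar>indicator E y *\<^sub>R f y\<bar>" for y
  have [measurable]: "F \<in> borel_measurable lebesgue"
    using f unfolding F_def set_borel_measurable_def by measurable
  have [measurable]: "(\<lambda>y. \<Omega> (x - y)) \<in> borel_measurable lebesgue"
    by (rule measurable_completion) measurable
  have F_on_S: "\<And>y. y \<in> ?S \<Longrightarrow> F y = \<bar>f y\<bar>" by (simp add: F_def)
  have "(\<integral>\<^sup>+y. ennreal (\<bar>\<Omega> (x - y)\<bar> powr \<sigma>) \<partial>?N)
      = (\<integral>\<^sup>+y \<in> ?S. ennreal (\<bar>\<Omega> (x - y)\<bar> powr \<sigma>) \<partial>lebesgue) / V"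
    by (rule average) measurable
  also have "\<dots> \<le> (\<integral>\<^sup>+y. ennreal (\<bar>\<Omega> (x - y)\<bar> powr \<sigma>) * indicator (ball x r) y \<partial>lebesgue) / V"
    by (intro divide_right_mono_ennreal nn_integral_mono) (simp split: split_indicator)
  also have "\<dots> \<le> ennreal c * V / V"
    using \<Omega>_bound unfolding V_def by (rule divide_right_mono_ennreal)
  also have "\<dots> = ennreal c"
    using r unfolding V_def by (intro mult_divide_eq_ennreal) (simp_all add: emeasure_ball less_imp_neq[symmetric])
  finally have "(\<integral>\<^sup>+y. ennreal (\<bar>\<Omega> (x - y)\<bar> * F y) \<partial>?N)
      \<le> ennreal (c powr (1/\<sigma>)) * ennroot q (\<integral>\<^sup>+y. ennreal (F y powr q) \<partial>?N)"
    by (rule nn_integral_Holder[OF \<sigma> q conj, rotated 4]) (measurable, simp add: F_def)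
  moreover have "(\<integral>\<^sup>+y \<in> ?S. ennreal (\<bar>\<Omega> (x - y)\<bar> * F y) \<partial>lebesgue)
               = (\<integral>\<^sup>+y \<in> ?S. ennreal (\<bar>\<Omega> (x - y)\<bar> * \<bar>f y\<bar>) \<partial>lebesgue)"
   and "(\<integral>\<^sup>+y \<in> ?S. ennreal (F y powr q) \<partial>lebesgue) = (\<integral>\<^sup>+y \<in> ?S. ennreal (\<bar>f y\<bar> powr q) \<partial>lebesgue)"
    by (auto intro!: nn_integral_cong simp: F_on_S split: split_indicator)
  ultimately show ?thesis unfolding V_def[symmetric] by (simp add: average)
qed

lemma ball_average_bounded_kernel:
  fixes E :: "'a::euclidean_space set" and \<Omega> :: "'a \<Rightarrow> real"
  assumes E: "E \<in> sets lebesgue" and f: "set_borel_measurable lebesgue E f" and K: "K \<ge> 0"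
    and bound: "AE y in lebesgue. y \<in> ball x r \<longrightarrow> \<bar>\<Omega> (x - y)\<bar> \<le> K"
  shows "(\<integral>\<^sup>+y \<in> ball x r \<inter> E. ennreal (\<bar>\<Omega> (x - y)\<bar> * \<bar>f y\<bar>) \<partial>lebesgue) / emeasure lebesgue (ball x r)
       \<le> ennreal K * ((\<integral>\<^sup>+y \<in> ball x r \<inter> E. ennreal \<bar>f y\<bar> \<partial>lebesgue) / emeasure lebesgue (ball x r))"
proof -
  have [measurable]: "ball x r \<in> sets lebesgue" by simp
  have "(\<lambda>y. ennreal \<bar>f y\<bar> * indicator (ball x r \<inter> E) y)
      = (\<lambda>y. ennreal \<bar>indicator E y *\<^sub>R f y\<bar> * indicator (ball x r) y)"
    by (auto simp: fun_eq_iff split: split_indicator)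
  also have "\<dots> \<in> borel_measurable lebesgue"
    using f unfolding set_borel_measurable_def by measurable
  finally have [measurable]: "(\<lambda>y. ennreal \<bar>f y\<bar> * indicator (ball x r \<inter> E) y) \<in> borel_measurable lebesgue" .
  have "(\<integral>\<^sup>+y \<in> ball x r \<inter> E. ennreal (\<bar>\<Omega> (x - y)\<bar> * \<bar>f y\<bar>) \<partial>lebesgue)
      \<le> (\<integral>\<^sup>+y. ennreal K * (ennreal \<bar>f y\<bar> * indicator (ball x r \<inter> E) y) \<partial>lebesgue)"
    using bound by (intro nn_integral_mono_AE, eventually_elim)
      (auto simp: ennreal_mult[symmetric] K intro!: ennreal_leI mult_right_mono split: split_indicator)
  also have "\<dots> = ennreal K * (\<integral>\<^sup>+y \<in> ball x r \<inter> E. ennreal \<bar>f y\<bar> \<partial>lebesgue)"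
    by (rule nn_integral_cmult) measurable
  finally show ?thesis by (auto dest: divide_right_mono_ennreal simp: ennreal_times_divide)
qed

lemma M_Omega_le_if_ball_averages_le:
  fixes E :: "'a::euclidean_space set"
  assumes q: "q > 0"
    and avg: "\<And>r. r > 0 \<Longrightarrow>
      (\<integral>\<^sup>+y \<in> ball x r \<inter> E. ennreal (\<bar>\<Omega> (x - y)\<bar> * \<bar>f y\<bar>) \<partial>lebesgue) / emeasure lebesgue (ball x r)
      \<le> ennreal K * ennroot q ((\<integral>\<^sup>+y \<in> ball x r \<inter> E. ennreal (\<bar>f y\<bar> powr q) \<partial>lebesgue) / emeasure lebesgue (ball x r))"
  shows "M_Omega E \<Omega> f x \<le> ennreal K * ennroot q (HL_max E (\<lambda>y. \<bar>f y\<bar> powr q) x)"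
  unfolding M_Omega_def
proof (rule SUP_least)
  fix r :: real assume r: "r \<in> {0<..}"
  have "(\<integral>\<^sup>+y \<in> ball x r \<inter> E. ennreal (\<bar>f y\<bar> powr q) \<partial>lebesgue) / emeasure lebesgue (ball x r)
      \<le> HL_max E (\<lambda>y. \<bar>f y\<bar> powr q) x"
    unfolding HL_max_def M_Omega_def using r by (intro SUP_upper2[of r]) auto
  then have "ennroot q ((\<integral>\<^sup>+y \<in> ball x r \<inter> E. ennreal (\<bar>f y\<bar> powr q) \<partial>lebesgue) / emeasure lebesgue (ball x r))
      \<le> ennroot q (HL_max E (\<lambda>y. \<bar>f y\<bar> powr q) x)"
    by (rule ennroot_mono[OF q])
  with avg[of r] r show "(\<integral>\<^sup>+y \<in> ball x r \<inter> E. ennreal (\<bar>\<Omega> (x - y)\<bar> * \<bar>f y\<bar>) \<partial>lebesgue) / emeasure lebesgue (ball x r)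
      \<le> ennreal K * ennroot q (HL_max E (\<lambda>y. \<bar>f y\<bar> powr q) x)"
    by (meson greaterThan_iff mult_left_mono order_trans zero_le)
qed

lemma M_Omega_le_maximal_if_Linfty_sphere:
  fixes E :: "'a::euclidean_space set" and \<Omega> :: "'a \<Rightarrow> real"
  assumes E: "E \<in> sets lebesgue" and Ls: "Ls_sphere \<infinity> \<Omega>"
    and hom: "\<And>x t. t > 0 \<Longrightarrow> \<Omega> (t *\<^sub>R x) = \<Omega> x"
  obtains K where "K > 0" "\<And>f x. set_borel_measurable lebesgue E f \<Longrightarrow> M_Omega E \<Omega> f x \<le> ennreal K * HL_max E f x"
proof -
  let ?S = "esssup (sphere_measure::'a measure) (\<lambda>x. ereal \<bar>\<Omega> x\<bar>)"
  have m: "\<Omega> \<in> borel_measurable sphere_measure" and "?S < \<infinity>"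
    using Ls unfolding Ls_sphere_def by auto
  define K where "K = max 1 (real_of_ereal ?S)"
  have K: "K > 0" "?S \<le> ereal K"
    using \<open>?S < \<infinity>\<close> unfolding K_def by (cases ?S; simp)+
  define h :: "real \<Rightarrow> ennreal" where "h = indicator {t. K < \<bar>t\<bar>}"
  have [measurable]: "h \<in> borel_measurable borel" unfolding h_def by measurable
  have "AE w in sphere_measure. ereal \<bar>\<Omega> w\<bar> \<le> ?S"
    by (rule esssup_AE)
  then have "AE w in (sphere_measure::'a measure). h (\<Omega> w) = 0"
    by eventually_elim (use K(2) in \<open>auto simp: h_def dest: order_trans\<close>)
  then have sphere0: "(\<integral>\<^sup>+ w. h (\<Omega> w) \<partial>(sphere_measure::'a measure)) = 0"
    using nn_integral_cong_AE by fastforce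
  have bound: "AE y in lebesgue. y \<in> ball x r \<longrightarrow> \<bar>\<Omega> (x - y)\<bar> \<le> K" if r: "r > 0" for x :: 'a and r
  proof -
    have [measurable]: "\<Omega> \<in> borel_measurable borel" by (rule borel_measurable_homogeneous[OF hom m])
    have [measurable]: "ball x r \<in> sets borel" by simp
    have "(\<integral>\<^sup>+y. h (\<Omega> (x - y)) * indicator (ball x r) y \<partial>lebesgue) = 0"
      using nn_integral_ball_homogeneous[OF hom m _ r, of h x] sphere0 by simp
    moreover have "(\<lambda>y. h (\<Omega> (x - y)) * indicator (ball x r) y) \<in> borel_measurable lebesgue"
      by (rule measurable_completion) measurable
    ultimately have "AE y in lebesgue. h (\<Omega> (x - y)) * indicator (ball x r) y = 0"
      by (simp add: nn_integral_0_iff_AE)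
    then show ?thesis by eventually_elim (auto simp: h_def indicator_def not_less split: if_splits)
  qed
  show ?thesis
  proof (rule that[OF K(1)])
    fix f :: "'a \<Rightarrow> real" and x assume f: "set_borel_measurable lebesgue E f"
    have "M_Omega E \<Omega> f x \<le> ennreal K * ennroot 1 (HL_max E (\<lambda>y. \<bar>f y\<bar> powr 1) x)"
      by (rule M_Omega_le_if_ball_averages_le)
        (use ball_average_bounded_kernel[OF E f _ bound] K in auto)
    then show "M_Omega E \<Omega> f x \<le> ennreal K * HL_max E f x"
      unfolding HL_max_def M_Omega_def by simp
  qed
qed

lemma M_Omega_le_maximal_if_Ls_sphere:
  fixes E :: "'a::euclidean_space set" and \<Omega> :: "'a \<Rightarrow> real"
  assumes E: "E \<in> sets lebesgue" and \<sigma>: "\<sigma> > 1" and Ls: "Ls_sphere (ereal \<sigma>) \<Omega>"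
    and hom: "\<And>x t. t > 0 \<Longrightarrow> \<Omega> (t *\<^sub>R x) = \<Omega> x"
  obtains K where "K > 0" "\<And>f x. set_borel_measurable lebesgue E f \<Longrightarrow>
     M_Omega E \<Omega> f x \<le> ennreal K * ennroot (\<sigma> / (\<sigma> - 1)) (HL_max E (\<lambda>y. \<bar>f y\<bar> powr (\<sigma> / (\<sigma> - 1))) x)"
proof -
  define q where "q = \<sigma> / (\<sigma> - 1)"
  have q: "q > 1" and conj: "1/\<sigma> + 1/q = 1"
    unfolding q_def using \<sigma> by (simp_all add: less_divide_eq field_simps)
  have m: "\<Omega> \<in> borel_measurable sphere_measure"
    and "(\<integral>\<^sup>+w. ennreal (\<bar>\<Omega> w\<bar> powr \<sigma>) \<partial>(sphere_measure::'a measure)) < \<infinity>"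
    using Ls unfolding Ls_sphere_def by auto
  then obtain a where a: "(\<integral>\<^sup>+w. ennreal (\<bar>\<Omega> w\<bar> powr \<sigma>) \<partial>(sphere_measure::'a measure)) = ennreal a" "a \<ge> 0"
    by (cases "\<integral>\<^sup>+w. ennreal (\<bar>\<Omega> w\<bar> powr \<sigma>) \<partial>(sphere_measure::'a measure)") auto
  have [measurable]: "\<Omega> \<in> borel_measurable borel" by (rule borel_measurable_homogeneous[OF hom m])
  define c where "c = a / (DIM('a) * unit_ball_vol DIM('a))"
  have c: "c \<ge> 0" unfolding c_def using a by simp
  have kernel: "(\<integral>\<^sup>+y. ennreal (\<bar>\<Omega> (x - y)\<bar> powr \<sigma>) * indicator (ball x r) y \<partial>lebesgue)
      = ennreal c * emeasure lebesgue (ball x r)" if "r > 0" for x r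
    unfolding c_def using a \<open>r > 0\<close> by (intro nn_integral_ball_homogeneous_eq_cmult_volume[OF hom m]) auto
  show ?thesis
  proof (rule that)
    show "c powr (1/\<sigma>) + 1 > 0" by (intro add_nonneg_pos) auto
    fix f :: "'a \<Rightarrow> real" and x assume f: "set_borel_measurable lebesgue E f"
    have "M_Omega E \<Omega> f x \<le> ennreal (c powr (1/\<sigma>)) * ennroot q (HL_max E (\<lambda>y. \<bar>f y\<bar> powr q) x)"
    proof (rule M_Omega_le_if_ball_averages_le)
      fix r :: real assume r: "r > 0"
      show "(\<integral>\<^sup>+y \<in> ball x r \<inter> E. ennreal (\<bar>\<Omega> (x - y)\<bar> * \<bar>f y\<bar>) \<partial>lebesgue) / emeasure lebesgue (ball x r)
          \<le> ennreal (c powr (1/\<sigma>)) *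
            ennroot q ((\<integral>\<^sup>+y \<in> ball x r \<inter> E. ennreal (\<bar>f y\<bar> powr q) \<partial>lebesgue) / emeasure lebesgue (ball x r))"
        by (rule ball_average_Holder[OF \<sigma> q conj E f _ r c]) (measurable, simp add: kernel[OF r])
    qed (use q in simp)
    also have "\<dots> \<le> ennreal (c powr (1/\<sigma>) + 1) * ennroot q (HL_max E (\<lambda>y. \<bar>f y\<bar> powr q) x)"
      by (intro mult_right_mono ennreal_leI) auto
    finally show "M_Omega E \<Omega> f x
        \<le> ennreal (c powr (1/\<sigma>) + 1) * ennroot (\<sigma> / (\<sigma> - 1)) (HL_max E (\<lambda>y. \<bar>f y\<bar> powr (\<sigma> / (\<sigma> - 1))) x)"
      unfolding q_def .
  qed
qed

lemma M_Omega_le_maximal_power_sconj: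
  fixes E :: "'a::euclidean_space set" and \<Omega> :: "'a \<Rightarrow> real"
  assumes E: "E \<in> sets lebesgue" and s: "1 < s" and Ls: "Ls_sphere s \<Omega>"
    and hom: "\<And>x t. t > 0 \<Longrightarrow> \<Omega> (t *\<^sub>R x) = \<Omega> x"
  obtains K where "K > 0" "\<And>f x. set_borel_measurable lebesgue E f \<Longrightarrow>
     M_Omega E \<Omega> f x \<le> ennreal K * ennroot (sconj s) (HL_max E (\<lambda>y. \<bar>f y\<bar> powr sconj s) x)"
proof (cases s)
  case (real \<sigma>)
  with s Ls have \<sigma>: "\<sigma> > 1" "Ls_sphere (ereal \<sigma>) \<Omega>" by auto
  obtain K where "K > 0"
    and bound: "\<And>f x. set_borel_measurable lebesgue E f \<Longrightarrow>
       M_Omega E \<Omega> f x \<le> ennreal K * ennroot (\<sigma> / (\<sigma> - 1)) (HL_max E (\<lambda>y. \<bar>f y\<bar> powr (\<sigma> / (\<sigma> - 1))) x)"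
    using M_Omega_le_maximal_if_Ls_sphere[where \<Omega> = \<Omega>, OF E \<sigma> hom] by blast
  show ?thesis by (rule that[OF \<open>K > 0\<close>]) (use bound real in \<open>simp add: sconj_def\<close>)
next
  case PInf
  with Ls have Ls_inf: "Ls_sphere \<infinity> \<Omega>" by simp
  obtain K where "K > 0"
    and bound: "\<And>f x. set_borel_measurable lebesgue E f \<Longrightarrow> M_Omega E \<Omega> f x \<le> ennreal K * HL_max E f x"
    using M_Omega_le_maximal_if_Linfty_sphere[where \<Omega> = \<Omega>, OF E Ls_inf hom] by blast
  have "HL_max E (\<lambda>y. \<bar>f y\<bar> powr 1) = HL_max E f" for f :: "'a \<Rightarrow> real"
    unfolding HL_max_def M_Omega_def by simp
  then show ?thesis by (intro that[OF \<open>K > 0\<close>]) (use bound PInf in \<open>simp add: sconj_def\<close>)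
qed (use s in simp)

theorem mainTheorem3:
  fixes E :: "'a::euclidean_space set" and \<Omega> :: "'a \<Rightarrow> real" and p :: "'a \<Rightarrow> real" and s :: ereal
  assumes "DIM('a) \<ge> 2"
    and "bounded E" and "open E"
    and "1 < s"
    and "Ls_sphere s \<Omega>"
    and "\<And>x t. t > 0 \<Longrightarrow> \<Omega> (t *\<^sub>R x) = \<Omega> x"
    and "P_log E p"
    and "B_class E (\<lambda>x. p x / sconj s)"
    and "conj_plus E p \<le> s"
  shows "\<exists>C::real. \<forall>f\<in>var_Lp E p.
           lux_norm E p (M_Omega E \<Omega> f) \<le> ennreal C * lux_norm E p (\<lambda>x. ennreal \<bar>f x\<bar>)"
proof -
  have E: "E \<in> sets lebesgue" using \<open>open E\<close> by simp
  obtain K where "K > 0" and dom: "\<And>f x. set_borel_measurable lebesgue E f \<Longrightarrow>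
      M_Omega E \<Omega> f x \<le> ennreal K * ennroot (sconj s) (HL_max E (\<lambda>y. \<bar>f y\<bar> powr sconj s) x)"
    using M_Omega_le_maximal_power_sconj[OF E \<open>1 < s\<close> \<open>Ls_sphere s \<Omega>\<close>] assms(6) by blast
  have "sconj s > 0" using \<open>1 < s\<close> by (cases s) (auto simp: sconj_def)
  then show ?thesis
    using lux_norm_bound_if_dominated_by_maximal_power[OF _ E \<open>B_class E (\<lambda>x. p x / sconj s)\<close> \<open>K > 0\<close> dom]
    by blast
qed

end
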